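(* Let $X\subseteq Q^*(\mathcal{G})$ be a hereditary class. Then the clique-width of graphs in $X$ is bounded by a constant if and only if the clique-width of the $Q$-graphs belonging to $X$ is bounded by a constant.
   Context: All graphs are finite, simple and undirected; $\mathcal{G}$ denotes the class of all such graphs. A class is hereditary if closed under taking induced subgraphs. For a graph $G=(V,E)$, $Q(G)$ is the graph with vertex set $V\cup E$ in which $V$ is a clique, $E$ is a clique, and $v\in V$ is adjacent to $e\in E$ iff $v$ is an endpoint of $e$ in $G$. A $Q$-graph is a graph isomorphic to $Q(G)$ for some graph $G$. For a class $Y$, $Q(Y)=\{Q(G):G\in Y\}$ and $Q^*(Y)$ is the set of all induced subgraphs of graphs in $Q(Y)$. *)

theory Defs
  imports Main
begin

type_synonym 'a graph = "'a set \<times> 'a set set"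

definition wf_graph :: "'a graph \<Rightarrow> bool" where
  "wf_graph G \<longleftrightarrow> finite (fst G) \<and>
     (\<forall>e\<in>snd G. \<exists>u v. e = {u, v} \<and> u \<noteq> v \<and> u \<in> fst G \<and> v \<in> fst G)"

definition induced_subgraph :: "'a graph \<Rightarrow> 'a graph \<Rightarrow> bool" where
  "induced_subgraph H G \<longleftrightarrow>
     (\<exists>S. S \<subseteq> fst G \<and> H = (S, {e\<in>snd G. e \<subseteq> S}))"

definition graph_iso :: "'a graph \<Rightarrow> 'b graph \<Rightarrow> bool" where
  "graph_iso G H \<longleftrightarrow> (\<exists>f. bij_betw f (fst G) (fst H) \<and>
     (\<forall>u\<in>fst G. \<forall>v\<in>fst G. {u, v} \<in> snd G \<longleftrightarrow> {f u, f v} \<in> snd H))"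

definition Qg :: "'a graph \<Rightarrow> ('a + 'a set) graph" where
  "Qg G = (Inl ` fst G \<union> Inr ` snd G,
     {{Inl u, Inl v} | u v. u \<in> fst G \<and> v \<in> fst G \<and> u \<noteq> v}
     \<union> {{Inr e, Inr f} | e f. e \<in> snd G \<and> f \<in> snd G \<and> e \<noteq> f}
     \<union> {{Inl v, Inr e} | v e. v \<in> fst G \<and> e \<in> snd G \<and> v \<in> e})"

definition all_graphs :: "nat graph set" where
  "all_graphs = {G. wf_graph G}"

definition is_Qgraph :: "nat graph \<Rightarrow> bool" where
  "is_Qgraph H \<longleftrightarrow> wf_graph H \<and> (\<exists>G\<in>all_graphs. graph_iso H (Qg G))"

definition Qstar_all :: "nat graph set" where
  "Qstar_all = {H. wf_graph H \<and> (\<exists>G\<in>all_graphs. \<exists>H'. induced_subgraph H' (Qg G)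
                                     \<and> graph_iso H H')}"

definition hereditary :: "'a graph set \<Rightarrow> bool" where
  "hereditary X \<longleftrightarrow> (\<forall>G\<in>X. \<forall>H. induced_subgraph H G \<longrightarrow> H \<in> X)"

inductive_set kexp :: "nat \<Rightarrow> ('a set \<times> 'a set set \<times> ('a \<Rightarrow> nat)) set"
  for k :: nat where
  single: "i < k \<Longrightarrow> ({v}, {}, \<lambda>_. i) \<in> kexp k"
| union: "(V1, E1, l1) \<in> kexp k \<Longrightarrow> (V2, E2, l2) \<in> kexp k \<Longrightarrow> V1 \<inter> V2 = {} \<Longrightarrow>
          (V1 \<union> V2, E1 \<union> E2, \<lambda>x. if x \<in> V1 then l1 x else l2 x) \<in> kexp k"
| join: "(V, E, l) \<in> kexp k \<Longrightarrow> i < k \<Longrightarrow> j < k \<Longrightarrow> i \<noteq> j \<Longrightarrow>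
          (V, E \<union> {{u, v} | u v. u \<in> V \<and> v \<in> V \<and> l u = i \<and> l v = j}, l) \<in> kexp k"
| relabel: "(V, E, l) \<in> kexp k \<Longrightarrow> i < k \<Longrightarrow> j < k \<Longrightarrow>
          (V, E, \<lambda>x. if l x = i then j else l x) \<in> kexp k"

definition cw_le :: "nat \<Rightarrow> 'a graph \<Rightarrow> bool" where
  "cw_le k G \<longleftrightarrow> (\<exists>l. (fst G, snd G, l) \<in> kexp k)"

definition clique_width :: "'a graph \<Rightarrow> nat" where
  "clique_width G = (LEAST k. cw_le k G)"

end

theory Submission
  imports Defs
begin

text \<open>
  Every graph in Q*(\<G>) is isomorphic to Q(V, E) for a vertex set V and an edge set E of some
  graph. If V is empty this is a clique, itself a Q-graph. Otherwise the edges of E inside V form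
  a graph G' such that Q(G') is an induced subgraph, hence lies in X and is a Q-graph of clique
  width at most c. The remaining edge-vertices of Q(V, E) form a clique that is completely joined
  to the edge-vertices of Q(G') and adjacent to at most one vertex of V, namely the endpoint
  inside V. Doubling the labels to tell edge-vertices from vertex-vertices, growing each such
  clique at the leaf of its anchor vertex, and finally joining it to the edge-vertices turns a
  c-expression for Q(G') into a (2c + 2)-expression for Q(V, E).
\<close>

section \<open>k-expressions with a prescribed final labelling\<close>

definition has_kexp :: "nat \<Rightarrow> 'a set \<Rightarrow> 'a set set \<Rightarrow> ('a \<Rightarrow> nat) \<Rightarrow> bool" where
  "has_kexp k V E l \<longleftrightarrow> (\<exists>l'. (V, E, l') \<in> kexp k \<and> (\<forall>x\<in>V. l' x = l x))"

definition join_edges :: "'a set \<Rightarrow> ('a \<Rightarrow> nat) \<Rightarrow> nat \<Rightarrow> nat \<Rightarrow> 'a set set" where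
  "join_edges V l i j = {{u, v} |u v. u \<in> V \<and> v \<in> V \<and> l u = i \<and> l v = j}"

definition cross :: "'a set \<Rightarrow> 'a set \<Rightarrow> 'a set set" where
  "cross S T = {{u, v} |u v. u \<in> S \<and> v \<in> T}"

definition clique_edges :: "'a set \<Rightarrow> 'a set set" where
  "clique_edges S = {{u, v} |u v. u \<in> S \<and> v \<in> S \<and> u \<noteq> v}"

lemma kexp_invariants:
  "(V, E, l) \<in> kexp k \<Longrightarrow> finite V \<and> V \<noteq> {} \<and> (\<forall>x\<in>V. l x < k) \<and> (\<forall>e\<in>E. e \<subseteq> V)"
  by (induction rule: kexp.induct) auto

lemma kexp_mono: "(V, E, l) \<in> kexp k \<Longrightarrow> k \<le> k' \<Longrightarrow> (V, E, l) \<in> kexp k'"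
  by (induction rule: kexp.induct) (auto intro: kexp.intros)

lemma has_kexp_invariants:
  "has_kexp k V E l \<Longrightarrow> finite V \<and> V \<noteq> {} \<and> (\<forall>x\<in>V. l x < k) \<and> (\<forall>e\<in>E. e \<subseteq> V)"
  unfolding has_kexp_def using kexp_invariants by fastforce

lemma has_kexp_cong: "has_kexp k V E l \<Longrightarrow> (\<And>x. x \<in> V \<Longrightarrow> l x = m x) \<Longrightarrow> has_kexp k V E m"
  unfolding has_kexp_def by auto

lemma has_kexp_mono: "has_kexp k V E l \<Longrightarrow> k \<le> k' \<Longrightarrow> has_kexp k' V E l"
  unfolding has_kexp_def using kexp_mono by blast

lemma has_kexp_single: "l v < k \<Longrightarrow> has_kexp k {v} {} l"
  unfolding has_kexp_def by (rule exI[of _ "\<lambda>_. l v"]) (auto intro: kexp.single)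

lemma has_kexp_union:
  assumes "has_kexp k V1 E1 l1" "has_kexp k V2 E2 l2" "V1 \<inter> V2 = {}"
  shows "has_kexp k (V1 \<union> V2) (E1 \<union> E2) (\<lambda>x. if x \<in> V1 then l1 x else l2 x)"
proof -
  obtain a b where "(V1, E1, a) \<in> kexp k" "\<forall>x\<in>V1. a x = l1 x"
    "(V2, E2, b) \<in> kexp k" "\<forall>x\<in>V2. b x = l2 x"
    using assms(1,2) unfolding has_kexp_def by blast
  with assms(3) show ?thesis
    unfolding has_kexp_def
    by (intro exI[of _ "\<lambda>x. if x \<in> V1 then a x else b x"]) (auto intro: kexp.union)
qed

lemma has_kexp_join:
  assumes "has_kexp k V E l" "i < k" "j < k" "i \<noteq> j"
  shows "has_kexp k V (E \<union> join_edges V l i j) l"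
proof -
  obtain a where a: "(V, E, a) \<in> kexp k" "\<forall>x\<in>V. a x = l x"
    using assms(1) unfolding has_kexp_def by blast
  then have "join_edges V l i j = join_edges V a i j"
    unfolding join_edges_def by metis
  with kexp.join[OF a(1) assms(2-4)] a(2) show ?thesis
    unfolding has_kexp_def join_edges_def by auto
qed

lemma has_kexp_relabel:
  assumes "has_kexp k V E l" "j < k"
  shows "has_kexp k V E (\<lambda>x. if l x = i then j else l x)"
proof (cases "i < k")
  case True
  obtain a where a: "(V, E, a) \<in> kexp k" "\<forall>x\<in>V. a x = l x"
    using assms(1) unfolding has_kexp_def by blast
  show ?thesis
    unfolding has_kexp_def using a kexp.relabel[OF a(1) True assms(2)]
    by (intro exI[of _ "\<lambda>x. if a x = i then j else a x"]) auto
next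
  case False
  with has_kexp_invariants[OF assms(1)] show ?thesis
    by (intro has_kexp_cong[OF assms(1)]) auto
qed

lemma join_edges_eq_cross:
  assumes "\<And>x. x \<in> V \<Longrightarrow> l x = i \<longleftrightarrow> x \<in> S" "\<And>x. x \<in> V \<Longrightarrow> l x = j \<longleftrightarrow> x \<in> T"
    "S \<subseteq> V" "T \<subseteq> V"
  shows "join_edges V l i j = cross S T"
  using assms unfolding join_edges_def cross_def by blast

lemma join_edges_classes: "join_edges V l i j = cross {x \<in> V. l x = i} {x \<in> V. l x = j}"
  unfolding join_edges_def cross_def by blast

lemma cross_Un_left: "cross (S1 \<union> S2) T = cross S1 T \<union> cross S2 T"
  unfolding cross_def by blast

lemma cross_Un_right: "cross S (T1 \<union> T2) = cross S T1 \<union> cross S T2"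
  unfolding cross_def by blast

lemma has_kexp_join_cross:
  assumes "has_kexp k V E l" "i < k" "j < k" "i \<noteq> j"
    "\<And>x. x \<in> V \<Longrightarrow> l x = i \<longleftrightarrow> x \<in> S" "\<And>x. x \<in> V \<Longrightarrow> l x = j \<longleftrightarrow> x \<in> T"
    "S \<subseteq> V" "T \<subseteq> V"
  shows "has_kexp k V (E \<union> cross S T) l"
  using has_kexp_join[OF assms(1-4)] join_edges_eq_cross[OF assms(5-8)] by simp

lemma cw_le_iff_has_kexp: "cw_le k G \<longleftrightarrow> (\<exists>l. has_kexp k (fst G) (snd G) l)"
  unfolding cw_le_def has_kexp_def by auto

lemma kexp_image:
  "(V, E, l) \<in> kexp k \<Longrightarrow> inj_on f V \<Longrightarrow> (\<forall>x\<in>V. m (f x) = l x)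
    \<Longrightarrow> has_kexp k (f ` V) ((`) f ` E) m"
proof (induction arbitrary: m rule: kexp.induct)
  case (single i v)
  then show ?case by (auto intro: has_kexp_single)
next
  case (union V1 E1 l1 V2 E2 l2)
  have inj: "inj_on f V1" "inj_on f V2"
    using union.prems(1) by (auto intro: inj_on_subset)
  have "m (f x) = l2 x" if "x \<in> V2" for x
    using that union.hyps(3) union.prems(2) by auto
  then have "has_kexp k (f ` V2) ((`) f ` E2) m"
    using union.IH(2)[OF inj(2)] by blast
  moreover have "has_kexp k (f ` V1) ((`) f ` E1) m"
    using union.IH(1)[OF inj(1)] union.prems(2) by auto
  moreover have "f ` V1 \<inter> f ` V2 = {}"
    using union.prems(1) union.hyps(3) by (auto simp: inj_on_def)
  ultimately show ?case
    by (auto simp: image_Un elim!: has_kexp_cong dest: has_kexp_union)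
next
  case (join V E l i j)
  have "(`) f ` join_edges V l i j = join_edges (f ` V) m i j"
    using join.prems(2) unfolding join_edges_def by (auto simp: image_iff) blast+
  with has_kexp_join[OF join.IH[OF join.prems] join.hyps(2-4)] show ?case
    by (simp add: image_Un join_edges_def)
next
  case (relabel V E l i j)
  define m' where "m' y = l (inv_into V f y)" for y
  have "has_kexp k (f ` V) ((`) f ` E) m'"
    using relabel.IH relabel.prems(1) by (simp add: m'_def)
  from has_kexp_relabel[OF this relabel.hyps(3), of i] relabel.prems show ?case
    by (elim has_kexp_cong) (auto simp: m'_def)
qed

lemma has_kexp_image:
  assumes "has_kexp k V E l" "inj_on f V"
  shows "has_kexp k (f ` V) ((`) f ` E) (\<lambda>y. l (inv_into V f y))"
proof -
  obtain a where "(V, E, a) \<in> kexp k" "\<forall>x\<in>V. a x = l x"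
    using assms(1) unfolding has_kexp_def by blast
  with assms(2) show ?thesis by (intro kexp_image) auto
qed

lemma has_kexp_edgeless:
  assumes "finite V" "V \<noteq> {}" "\<forall>x\<in>V. l x < k"
  shows "has_kexp k V {} l"
  using assms
proof (induction V rule: finite_ne_induct)
  case (singleton x)
  then show ?case by (auto intro: has_kexp_single)
next
  case (insert x F)
  have "has_kexp k F {} l" "has_kexp k {x} {} l" "F \<inter> {x} = {}"
    using insert by (auto intro: has_kexp_single)
  from has_kexp_union[OF this]
  have "has_kexp k (F \<union> {x}) ({} \<union> {}) (\<lambda>y. if y \<in> F then l y else l y)" .
  then show ?case by simp
qed

lemma has_kexp_add_edges:
  assumes "has_kexp k V E l" "inj_on l V" "finite N"
    "\<forall>e\<in>N. \<exists>u v. e = {u, v} \<and> u \<noteq> v \<and> u \<in> V \<and> v \<in> V"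
  shows "has_kexp k V (E \<union> N) l"
  using assms(3,4)
proof (induction N rule: finite_induct)
  case empty
  then show ?case using assms(1) by simp
next
  case (insert e N)
  then obtain u v where e: "e = {u, v}" "u \<noteq> v" "u \<in> V" "v \<in> V"
    by blast
  have IH: "has_kexp k V (E \<union> N) l"
    using insert by simp
  have "l u < k" "l v < k" "l u \<noteq> l v"
    using has_kexp_invariants[OF IH] assms(2) e by (auto simp: inj_on_eq_iff)
  from has_kexp_join[OF IH this]
  have "has_kexp k V (E \<union> N \<union> join_edges V l (l u) (l v)) l" .
  moreover have "join_edges V l (l u) (l v) = {e}"
    using assms(2) e unfolding join_edges_def by (auto simp: inj_on_eq_iff)
  ultimately show ?case by (simp add: insert_commute)
qed

lemma wf_graph_finite_edges: "wf_graph G \<Longrightarrow> finite (snd G)"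
proof -
  assume "wf_graph G"
  then have "snd G \<subseteq> Pow (fst G)" "finite (fst G)"
    unfolding wf_graph_def by auto
  then show ?thesis
    by (simp add: finite_subset)
qed

lemma cw_le_card:
  assumes "wf_graph G" "fst G \<noteq> {}"
  shows "cw_le (card (fst G)) G"
proof -
  have fin: "finite (fst G)"
    using assms(1) unfolding wf_graph_def by blast
  then obtain l where l: "bij_betw l (fst G) {..<card (fst G)}"
    using ex_bij_betw_finite_nat atLeast0LessThan by metis
  have "has_kexp (card (fst G)) (fst G) {} l"
    using fin assms(2) l by (intro has_kexp_edgeless) (auto dest: bij_betwE)
  then have "has_kexp (card (fst G)) (fst G) ({} \<union> snd G) l"
    using assms(1) wf_graph_finite_edges[OF assms(1)] l
    by (intro has_kexp_add_edges) (auto simp: bij_betw_def wf_graph_def)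
  then show ?thesis
    unfolding cw_le_iff_has_kexp by auto
qed

lemma cw_le_clique_width:
  assumes "wf_graph G" "fst G \<noteq> {}"
  shows "cw_le (clique_width G) G"
  unfolding clique_width_def using cw_le_card[OF assms] by (rule LeastI)

lemma clique_width_le: "cw_le k G \<Longrightarrow> clique_width G \<le> k"
  unfolding clique_width_def by (rule Least_le)

lemma cw_le_mono: "cw_le k G \<Longrightarrow> k \<le> k' \<Longrightarrow> cw_le k' G"
  unfolding cw_le_iff_has_kexp using has_kexp_mono by blast

section \<open>Attaching anchored cliques to a k-expression\<close>

definition anchor_edges :: "'a set \<Rightarrow> ('a \<Rightarrow> 'a) \<Rightarrow> 'a set \<Rightarrow> 'a set set" where
  "anchor_edges F h S = {{p, h p} |p. p \<in> S \<inter> F}"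

definition anchored :: "'a set \<Rightarrow> ('a \<Rightarrow> 'a) \<Rightarrow> 'a set \<Rightarrow> 'a set" where
  "anchored P h V = {p \<in> P. h p \<in> V}"

lemma clique_edges_empty [simp]: "clique_edges {} = {}"
  by (auto simp: clique_edges_def)

lemma anchor_edges_empty [simp]: "anchor_edges F h {} = {}"
  by (auto simp: anchor_edges_def)

lemma clique_edges_insert: "p \<notin> Q \<Longrightarrow> clique_edges (insert p Q) = clique_edges Q \<union> cross {p} Q"
  unfolding clique_edges_def cross_def by (auto simp: insert_commute)

lemma clique_edges_Un:
  "S \<inter> T = {} \<Longrightarrow> clique_edges (S \<union> T) = clique_edges S \<union> clique_edges T \<union> cross S T"
  unfolding clique_edges_def cross_def by (auto simp: insert_commute) blast+

lemma anchor_edges_insert: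
  "anchor_edges F h (insert p Q) = anchor_edges F h Q \<union> (if p \<in> F then {{p, h p}} else {})"
  by (auto simp: anchor_edges_def)

lemma anchor_edges_Un: "anchor_edges F h (S \<union> T) = anchor_edges F h S \<union> anchor_edges F h T"
  by (auto simp: anchor_edges_def)

lemma anchored_Un: "anchored P h (V1 \<union> V2) = anchored P h V1 \<union> anchored P h V2"
  by (auto simp: anchored_def)

lemma has_kexp_union_join_class:
  assumes "has_kexp K W1 E1 l1" "has_kexp K W2 E2 l2" "W1 \<inter> W2 = {}" "c + 1 < K"
    "\<forall>x\<in>W1. l1 x \<le> c" "\<forall>x\<in>W2. l2 x \<le> c"
  shows "has_kexp K (W1 \<union> W2) (E1 \<union> E2 \<union> cross {x \<in> W1. l1 x = c} {x \<in> W2. l2 x = c})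
    (\<lambda>x. if x \<in> W1 then l1 x else l2 x)"
proof -
  define m where "m = (\<lambda>x. if x \<in> W1 then l1 x else if l2 x = c then c + 1 else l2 x)"
  have "has_kexp K W2 E2 (\<lambda>x. if l2 x = c then c + 1 else l2 x)"
    using assms(2,4) by (rule has_kexp_relabel)
  from has_kexp_union[OF assms(1) this assms(3)]
  have "has_kexp K (W1 \<union> W2) (E1 \<union> E2) m"
    unfolding m_def .
  then have "has_kexp K (W1 \<union> W2) (E1 \<union> E2 \<union> cross {x \<in> W1. l1 x = c} {x \<in> W2. l2 x = c}) m"
    by (rule has_kexp_join_cross[of _ _ _ _ c "c + 1"]) (use assms(3-6) in \<open>auto simp: m_def\<close>)
  from has_kexp_relabel[OF this, of c "c + 1"] show ?thesis
    by (rule has_kexp_cong) (use assms(3-6) in \<open>auto simp: m_def\<close>)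
qed

text \<open>Each new vertex enters with the spare label t, is joined to the clique label c and, if it
  lies in F, to the anchor label a, and is then merged into c.\<close>

lemma has_kexp_pendant_clique:
  assumes "finite Q" "v \<notin> Q" "\<forall>p\<in>Q. h p = v" "a < K" "c < K" "t < K" "a \<noteq> c" "t \<noteq> c" "t \<noteq> a"
  shows "has_kexp K (insert v Q) (clique_edges Q \<union> anchor_edges F h Q) (\<lambda>x. if x = v then a else c)"
  using assms(1-3)
proof (induction Q rule: finite_induct)
  case empty
  then show ?case using assms by (simp add: has_kexp_single)
next
  case (insert p Q)
  let ?W = "insert v Q \<union> {p}"
  define m where "m x = (if x = v then a else if x \<in> Q then c else t)" for x
  have "has_kexp K (insert v Q) (clique_edges Q \<union> anchor_edges F h Q) (\<lambda>x. if x = v then a else c)"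
    "has_kexp K {p} {} (\<lambda>_. t)" "insert v Q \<inter> {p} = {}"
    using insert assms(6) by (auto intro: has_kexp_single)
  from has_kexp_union[OF this]
  have "has_kexp K ?W (clique_edges Q \<union> anchor_edges F h Q \<union> {}) m"
    by (rule has_kexp_cong) (auto simp: m_def)
  then have clique: "has_kexp K ?W (clique_edges Q \<union> anchor_edges F h Q \<union> cross {p} Q) m"
    using assms insert by (intro has_kexp_join_cross[of _ _ _ _ t c]) (auto simp: m_def)
  have "has_kexp K ?W (clique_edges Q \<union> anchor_edges F h Q \<union> cross {p} Q
      \<union> (if p \<in> F then {{p, h p}} else {})) m"
  proof (cases "p \<in> F")
    case True
    have "cross {p} {v} = {{p, h p}}"
      using insert by (auto simp: cross_def)
    moreover have
      "has_kexp K ?W (clique_edges Q \<union> anchor_edges F h Q \<union> cross {p} Q \<union> cross {p} {v}) m"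
      by (rule has_kexp_join_cross[OF clique, of t a]) (use assms insert in \<open>auto simp: m_def\<close>)
    ultimately show ?thesis
      using True by simp
  qed (use clique in simp)
  from has_kexp_relabel[OF this assms(5), of t]
  show ?case
    using assms insert
    by (auto simp: clique_edges_insert anchor_edges_insert Un_ac insert_commute m_def
        elim!: has_kexp_cong)
qed

lemma kexp_split_labels:
  "(V, E, l) \<in> kexp k \<Longrightarrow> has_kexp (2 * k) V E (\<lambda>x. if x \<in> B then k + l x else l x)"
proof (induction rule: kexp.induct)
  case (single i v)
  then show ?case by (intro has_kexp_single) auto
next
  case (union V1 E1 l1 V2 E2 l2)
  from has_kexp_union[OF union.IH union.hyps(3)] show ?case
    by (rule has_kexp_cong) auto
next
  case (join V E l i j)
  define s where "s x = (if x \<in> B then k + l x else l x)" for x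
  have classes: "{x \<in> V. l x = n} = {x \<in> V. s x = n} \<union> {x \<in> V. s x = k + n}" if "n < k" for n
    using that kexp_invariants[OF join.hyps(1)] by (auto simp: s_def)
  have "has_kexp (2 * k) V (E \<union> join_edges V s i j \<union> join_edges V s i (k + j)
      \<union> join_edges V s (k + i) j \<union> join_edges V s (k + i) (k + j)) s"
    using join.hyps(2-4) join.IH unfolding s_def[symmetric]
    by (intro has_kexp_join) auto
  moreover have "join_edges V l i j = join_edges V s i j \<union> join_edges V s i (k + j)
      \<union> join_edges V s (k + i) j \<union> join_edges V s (k + i) (k + j)"
    unfolding join_edges_classes classes[OF join.hyps(2)] classes[OF join.hyps(3)]
      cross_Un_left cross_Un_right by blast
  ultimately show ?case
    unfolding s_def join_edges_def by (simp add: Un_assoc)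
next
  case (relabel V E l i j)
  define s where "s x = (if x \<in> B then k + l x else l x)" for x
  define s' where "s' x = (if s x = i then j else s x)" for x
  have "has_kexp (2 * k) V E s'"
    unfolding s'_def using relabel.hyps(3) relabel.IH unfolding s_def[symmetric]
    by (intro has_kexp_relabel) auto
  then have "has_kexp (2 * k) V E (\<lambda>x. if s' x = k + i then k + j else s' x)"
    using relabel.hyps(3) by (intro has_kexp_relabel) auto
  then show ?case
    by (rule has_kexp_cong)
      (use kexp_invariants[OF relabel.hyps(1)] relabel.hyps(2,3) in \<open>auto simp: s_def s'_def\<close>)
qed

text \<open>The vertices of P anchored at v are created at the leaf for v; at a union the two cliques
  are joined through the spare label k + 1.\<close>

lemma kexp_attach_pendant_cliques:
  assumes "(V, E, l) \<in> kexp k" "finite P" "P \<inter> V = {}"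
  shows "has_kexp (k + 2) (V \<union> anchored P h V)
    (E \<union> clique_edges (anchored P h V) \<union> anchor_edges F h (anchored P h V))
    (\<lambda>x. if x \<in> V then l x else k)"
  using assms(1,3)
proof (induction rule: kexp.induct)
  case (single i v)
  have "has_kexp (k + 2) (insert v (anchored P h {v}))
      (clique_edges (anchored P h {v}) \<union> anchor_edges F h (anchored P h {v}))
      (\<lambda>x. if x = v then i else k)"
    using single assms(2)
    by (intro has_kexp_pendant_clique[where t = "k + 1"]) (auto simp: anchored_def)
  then show ?case by simp
next
  case (union V1 E1 l1 V2 E2 l2)
  let ?Q1 = "anchored P h V1" and ?Q2 = "anchored P h V2"
  have lt: "\<forall>x\<in>V1. l1 x < k" "\<forall>x\<in>V2. l2 x < k"
    using kexp_invariants[OF union.hyps(1)] kexp_invariants[OF union.hyps(2)] by auto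
  have disj: "(V1 \<union> ?Q1) \<inter> (V2 \<union> ?Q2) = {}" "?Q1 \<inter> ?Q2 = {}" "?Q1 \<inter> V1 = {}" "?Q2 \<inter> V2 = {}"
    using union.hyps(3) union.prems by (auto simp: anchored_def)
  have IH1: "has_kexp (k + 2) (V1 \<union> ?Q1) (E1 \<union> clique_edges ?Q1 \<union> anchor_edges F h ?Q1)
      (\<lambda>x. if x \<in> V1 then l1 x else k)"
    and IH2: "has_kexp (k + 2) (V2 \<union> ?Q2) (E2 \<union> clique_edges ?Q2 \<union> anchor_edges F h ?Q2)
      (\<lambda>x. if x \<in> V2 then l2 x else k)"
    using union.IH union.prems by auto
  have le: "\<forall>x\<in>V1 \<union> ?Q1. (if x \<in> V1 then l1 x else k) \<le> k"
    "\<forall>x\<in>V2 \<union> ?Q2. (if x \<in> V2 then l2 x else k) \<le> k"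
    using lt by auto
  have classes: "{x \<in> V1 \<union> ?Q1. (if x \<in> V1 then l1 x else k) = k} = ?Q1"
    "{x \<in> V2 \<union> ?Q2. (if x \<in> V2 then l2 x else k) = k} = ?Q2"
    using lt disj by auto
  from has_kexp_union_join_class[OF IH1 IH2 disj(1) _ le]
  have joined: "has_kexp (k + 2) ((V1 \<union> ?Q1) \<union> (V2 \<union> ?Q2))
      (E1 \<union> clique_edges ?Q1 \<union> anchor_edges F h ?Q1 \<union> (E2 \<union> clique_edges ?Q2 \<union> anchor_edges F h ?Q2)
        \<union> cross ?Q1 ?Q2)
      (\<lambda>x. if x \<in> V1 \<union> ?Q1 then if x \<in> V1 then l1 x else k else if x \<in> V2 then l2 x else k)"
    unfolding classes by simp
  have vertices: "(V1 \<union> ?Q1) \<union> (V2 \<union> ?Q2) = (V1 \<union> V2) \<union> anchored P h (V1 \<union> V2)"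
    unfolding anchored_Un by blast
  have edges: "E1 \<union> clique_edges ?Q1 \<union> anchor_edges F h ?Q1
      \<union> (E2 \<union> clique_edges ?Q2 \<union> anchor_edges F h ?Q2) \<union> cross ?Q1 ?Q2
    = (E1 \<union> E2) \<union> clique_edges (anchored P h (V1 \<union> V2)) \<union> anchor_edges F h (anchored P h (V1 \<union> V2))"
    unfolding anchored_Un clique_edges_Un[OF disj(2)] anchor_edges_Un by blast
  from joined[unfolded vertices edges] show ?case
    by (rule has_kexp_cong) (use disj in auto)
next
  case (join V E l i j)
  let ?Q = "anchored P h V"
  have "has_kexp (k + 2) (V \<union> ?Q) (E \<union> clique_edges ?Q \<union> anchor_edges F h ?Q
      \<union> join_edges (V \<union> ?Q) (\<lambda>x. if x \<in> V then l x else k) i j) (\<lambda>x. if x \<in> V then l x else k)"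
    using join by (intro has_kexp_join) auto
  moreover have "join_edges (V \<union> ?Q) (\<lambda>x. if x \<in> V then l x else k) i j = join_edges V l i j"
    using join.hyps(2,3) unfolding join_edges_def by fastforce
  ultimately show ?case
    by (simp add: join_edges_def Un_ac)
next
  case (relabel V E l i j)
  have "has_kexp (k + 2) (V \<union> anchored P h V)
      (E \<union> clique_edges (anchored P h V) \<union> anchor_edges F h (anchored P h V))
      (\<lambda>x. if (if x \<in> V then l x else k) = i then j else if x \<in> V then l x else k)"
    using relabel by (intro has_kexp_relabel) auto
  then show ?case
    by (rule has_kexp_cong) (use relabel.hyps(2) in auto)
qed

lemma has_kexp_join_label_classes:
  assumes "has_kexp K V E l" "p < K" "finite L" "L \<subseteq> {..<K}" "p \<notin> L"
  shows "has_kexp K V (E \<union> cross {x \<in> V. l x = p} {x \<in> V. l x \<in> L}) l"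
  using assms(3-5)
proof (induction L rule: finite_induct)
  case empty
  then show ?case using assms(1) by (simp add: cross_def)
next
  case (insert n L)
  then have "has_kexp K V (E \<union> cross {x \<in> V. l x = p} {x \<in> V. l x \<in> L} \<union> join_edges V l p n) l"
    using assms(2) by (intro has_kexp_join) auto
  moreover have "{x \<in> V. l x \<in> insert n L} = {x \<in> V. l x \<in> L} \<union> {x \<in> V. l x = n}"
    by auto
  ultimately show ?case
    by (simp add: join_edges_classes cross_Un_right Un_assoc)
qed

lemma has_kexp_add_anchored_clique:
  assumes "has_kexp k V E l" "B \<subseteq> V" "finite P" "P \<inter> V = {}" "h ` P \<subseteq> V"
  shows "\<exists>m. has_kexp (2 * k + 2) (V \<union> P) (E \<union> clique_edges P \<union> anchor_edges F h P \<union> cross P B) m"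
proof -
  obtain l' where l': "(V, E, l') \<in> kexp k"
    using assms(1) unfolding has_kexp_def by blast
  then have lt: "\<forall>x\<in>V. l' x < k"
    using kexp_invariants by blast
  \<comment> \<open>B moves to the second block k..<2k of labels, so that P (label 2k) can finally
    be joined to B alone.\<close>
  obtain s where s: "(V, E, s) \<in> kexp (2 * k)" "\<forall>x\<in>V. s x = (if x \<in> B then k + l' x else l' x)"
    using kexp_split_labels[OF l', of B] unfolding has_kexp_def by blast
  define m where "m = (\<lambda>x. if x \<in> V then s x else 2 * k)"
  have "anchored P h V = P"
    using assms(5) unfolding anchored_def by auto
  with kexp_attach_pendant_cliques[OF s(1) assms(3,4), of h F]
  have "has_kexp (2 * k + 2) (V \<union> P) (E \<union> clique_edges P \<union> anchor_edges F h P) m"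
    by (simp add: m_def)
  moreover have "{k..<2 * k} \<subseteq> {..<2 * k + 2}"
    by auto
  ultimately have "has_kexp (2 * k + 2) (V \<union> P) (E \<union> clique_edges P \<union> anchor_edges F h P
      \<union> cross {x \<in> V \<union> P. m x = 2 * k} {x \<in> V \<union> P. m x \<in> {k..<2 * k}}) m"
    by (intro has_kexp_join_label_classes) auto
  moreover have "{x \<in> V \<union> P. m x = 2 * k} = P" "{x \<in> V \<union> P. m x \<in> {k..<2 * k}} = B"
    using s(2) lt assms(2,4) by (auto simp: m_def)
  ultimately show ?thesis by auto
qed

section \<open>Induced subgraphs, isomorphisms and Q-graphs\<close>

definition induce :: "'a graph \<Rightarrow> 'a set \<Rightarrow> 'a graph" where
  "induce G S = (S, {e \<in> snd G. e \<subseteq> S})"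

definition complete_graph :: "'a graph \<Rightarrow> bool" where
  "complete_graph G \<longleftrightarrow> (\<forall>u\<in>fst G. \<forall>v\<in>fst G. u \<noteq> v \<longrightarrow> {u, v} \<in> snd G)"

lemma induced_subgraph_induce: "S \<subseteq> fst G \<Longrightarrow> induced_subgraph (induce G S) G"
  unfolding induced_subgraph_def induce_def by blast

lemma induced_subgraph_iff: "induced_subgraph H G \<longleftrightarrow> (\<exists>S \<subseteq> fst G. H = induce G S)"
  unfolding induced_subgraph_def induce_def by blast

lemma wf_graph_induce:
  assumes "wf_graph G" "S \<subseteq> fst G"
  shows "wf_graph (induce G S)"
proof -
  have "finite S"
    using assms(1) unfolding wf_graph_def by (meson assms(2) finite_subset)
  moreover have "\<exists>u v. e = {u, v} \<and> u \<noteq> v \<and> u \<in> S \<and> v \<in> S" if e: "e \<in> snd G" "e \<subseteq> S" for e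
  proof -
    obtain u v where "e = {u, v}" "u \<noteq> v"
      using e(1) assms(1) unfolding wf_graph_def by blast
    with e(2) show ?thesis by auto
  qed
  ultimately show ?thesis
    unfolding wf_graph_def induce_def by simp
qed

lemma wf_graph_edge_neq:
  assumes "wf_graph G" "{u, v} \<in> snd G"
  shows "u \<noteq> v"
proof
  assume "u = v"
  with assms have "\<exists>a b. {u} = {a, b} \<and> a \<noteq> b"
    unfolding wf_graph_def by auto
  then show False
    by (metis insert_absorb insert_iff singletonD)
qed

lemma wf_graph_Qg:
  assumes "wf_graph G"
  shows "wf_graph (Qg G)"
proof -
  have "finite (fst (Qg G))"
    using assms wf_graph_finite_edges[OF assms] unfolding wf_graph_def Qg_def by simp
  moreover have "\<exists>x y. e = {x, y} \<and> x \<noteq> y \<and> x \<in> fst (Qg G) \<and> y \<in> fst (Qg G)"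
    if "e \<in> snd (Qg G)" for e
    using that unfolding Qg_def by auto
  ultimately show ?thesis
    unfolding wf_graph_def by blast
qed

fun Q_adj :: "'a graph \<Rightarrow> 'a + 'a set \<Rightarrow> 'a + 'a set \<Rightarrow> bool" where
  "Q_adj G (Inl u) (Inl v) \<longleftrightarrow> u \<in> fst G \<and> v \<in> fst G \<and> u \<noteq> v"
| "Q_adj G (Inr e) (Inr f) \<longleftrightarrow> e \<in> snd G \<and> f \<in> snd G \<and> e \<noteq> f"
| "Q_adj G (Inl v) (Inr e) \<longleftrightarrow> v \<in> fst G \<and> e \<in> snd G \<and> v \<in> e"
| "Q_adj G (Inr e) (Inl v) \<longleftrightarrow> v \<in> fst G \<and> e \<in> snd G \<and> v \<in> e"

lemma Q_adj_sym: "Q_adj G x y \<longleftrightarrow> Q_adj G y x"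
  by (cases x; cases y) auto

lemma snd_Qg: "snd (Qg G) = {{x, y} |x y. Q_adj G x y}"
proof
  show "snd (Qg G) \<subseteq> {{x, y} |x y. Q_adj G x y}"
    unfolding Qg_def by fastforce
  show "{{x, y} |x y. Q_adj G x y} \<subseteq> snd (Qg G)"
  proof clarify
    fix x y assume "Q_adj G x y"
    then show "{x, y} \<in> snd (Qg G)"
      unfolding Qg_def by (cases x; cases y) (auto simp: insert_commute)
  qed
qed

lemma Qg_edge_iff: "{x, y} \<in> snd (Qg G) \<longleftrightarrow> Q_adj G x y"
  unfolding snd_Qg by (auto simp: doubleton_eq_iff Q_adj_sym)

lemma doubletons_within:
  "{e \<in> {{x, y} |x y. P x y}. e \<subseteq> S} = {{x, y} |x y. P x y \<and> x \<in> S \<and> y \<in> S}"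
  by auto

lemma induce_Qg:
  assumes "V \<subseteq> fst G" "E \<subseteq> snd G"
  shows "induce (Qg G) (Inl ` V \<union> Inr ` E) = Qg (V, E)"
proof -
  let ?S = "Inl ` V \<union> Inr ` E"
  have adj: "Q_adj G x y \<and> x \<in> ?S \<and> y \<in> ?S \<longleftrightarrow> Q_adj (V, E) x y" for x y
    using assms by (cases x; cases y) auto
  have "{e \<in> snd (Qg G). e \<subseteq> ?S} = {{x, y} |x y. Q_adj G x y \<and> x \<in> ?S \<and> y \<in> ?S}"
    unfolding snd_Qg by (rule doubletons_within)
  also have "\<dots> = snd (Qg (V, E))"
    unfolding snd_Qg adj ..
  finally have "{e \<in> snd (Qg G). e \<subseteq> ?S} = snd (Qg (V, E))" .
  then show ?thesis
    unfolding induce_def by (simp add: Qg_def)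
qed

lemma graph_iso_sym: "graph_iso G H \<Longrightarrow> graph_iso H G"
proof -
  assume "graph_iso G H"
  then obtain f where f: "bij_betw f (fst G) (fst H)"
    and edges: "\<forall>u\<in>fst G. \<forall>v\<in>fst G. {u, v} \<in> snd G \<longleftrightarrow> {f u, f v} \<in> snd H"
    unfolding graph_iso_def by blast
  let ?g = "inv_into (fst G) f"
  have "bij_betw ?g (fst H) (fst G)"
    using f by (rule bij_betw_inv_into)
  moreover have "{x, y} \<in> snd H \<longleftrightarrow> {?g x, ?g y} \<in> snd G" if "x \<in> fst H" "y \<in> fst H" for x y
    using that f edges bij_betw_inv_into_right[OF f] bij_betwE[OF bij_betw_inv_into[OF f]] by metis
  ultimately show "graph_iso H G"
    unfolding graph_iso_def by blast
qed

lemma graph_iso_induce: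
  assumes "graph_iso H H'" "T \<subseteq> fst H'"
  shows "\<exists>R \<subseteq> fst H. graph_iso (induce H R) (induce H' T)"
proof -
  obtain f where f: "bij_betw f (fst H) (fst H')"
    and edges: "\<forall>u\<in>fst H. \<forall>v\<in>fst H. {u, v} \<in> snd H \<longleftrightarrow> {f u, f v} \<in> snd H'"
    using assms(1) unfolding graph_iso_def by blast
  define R where "R = {x \<in> fst H. f x \<in> T}"
  have "inj_on f R"
    using bij_betw_imp_inj_on[OF f] by (rule inj_on_subset) (simp add: R_def)
  moreover have "f ` R = T"
    using bij_betw_imp_surj_on[OF f] assms(2) unfolding R_def by auto
  moreover have "{u, v} \<in> snd (induce H R) \<longleftrightarrow> {f u, f v} \<in> snd (induce H' T)"
    if "u \<in> R" "v \<in> R" for u v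
    using that edges unfolding R_def induce_def by simp
  ultimately have "graph_iso (induce H R) (induce H' T)"
    unfolding graph_iso_def bij_betw_def by (auto simp: induce_def)
  moreover have "R \<subseteq> fst H"
    unfolding R_def by blast
  ultimately show ?thesis
    by blast
qed

lemma graph_iso_edges:
  assumes "wf_graph G" "wf_graph H" "bij_betw f (fst G) (fst H)"
    "\<forall>u\<in>fst G. \<forall>v\<in>fst G. {u, v} \<in> snd G \<longleftrightarrow> {f u, f v} \<in> snd H"
  shows "snd H = (`) f ` snd G"
proof
  show "snd H \<subseteq> (`) f ` snd G"
  proof
    fix e assume e: "e \<in> snd H"
    then obtain x y where "e = {x, y}" "x \<in> fst H" "y \<in> fst H"
      using assms(2) unfolding wf_graph_def by blast
    moreover obtain u v where "u \<in> fst G" "v \<in> fst G" "x = f u" "y = f v"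
      using assms(3) calculation unfolding bij_betw_def by blast
    ultimately show "e \<in> (`) f ` snd G"
      using assms(4) e by (auto intro!: image_eqI[of _ _ "{u, v}"])
  qed
  show "(`) f ` snd G \<subseteq> snd H"
    using assms(1,4) unfolding wf_graph_def by fastforce
qed

lemma cw_le_graph_iso:
  assumes "wf_graph G" "wf_graph H" "graph_iso G H" "cw_le k G"
  shows "cw_le k H"
proof -
  obtain f where f: "bij_betw f (fst G) (fst H)"
    and edges: "\<forall>u\<in>fst G. \<forall>v\<in>fst G. {u, v} \<in> snd G \<longleftrightarrow> {f u, f v} \<in> snd H"
    using assms(3) unfolding graph_iso_def by blast
  obtain l where "has_kexp k (fst G) (snd G) l"
    using assms(4) unfolding cw_le_iff_has_kexp by blast
  from has_kexp_image[OF this bij_betw_imp_inj_on[OF f]] show ?thesis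
    unfolding cw_le_iff_has_kexp graph_iso_edges[OF assms(1,2) f edges] bij_betw_imp_surj_on[OF f]
    by blast
qed

lemma complete_graph_Qg_no_vertices: "complete_graph (Qg ({}, E))"
  unfolding complete_graph_def Qg_edge_iff by (auto simp: Qg_def)

lemma complete_graph_iso:
  assumes "graph_iso G H" "complete_graph H"
  shows "complete_graph G"
proof -
  obtain f where f: "bij_betw f (fst G) (fst H)"
    and edges: "\<forall>u\<in>fst G. \<forall>v\<in>fst G. {u, v} \<in> snd G \<longleftrightarrow> {f u, f v} \<in> snd H"
    using assms(1) unfolding graph_iso_def by blast
  have "{u, v} \<in> snd G" if "u \<in> fst G" "v \<in> fst G" "u \<noteq> v" for u v
  proof -
    have "f u \<noteq> f v" "f u \<in> fst H" "f v \<in> fst H"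
      using that f by (auto simp: bij_betw_def inj_on_eq_iff)
    then show ?thesis
      using assms(2) edges that unfolding complete_graph_def by blast
  qed
  then show ?thesis
    unfolding complete_graph_def by blast
qed

lemma is_Qgraph_complete_graph:
  assumes "wf_graph H" "complete_graph H"
  shows "is_Qgraph H"
proof -
  have "(fst H, {}) \<in> all_graphs"
    using assms(1) unfolding all_graphs_def wf_graph_def by auto
  moreover have "bij_betw Inl (fst H) (fst (Qg (fst H, {})))"
    unfolding Qg_def by (simp add: bij_betw_def)
  moreover have "{u, v} \<in> snd H \<longleftrightarrow> {Inl u, Inl v} \<in> snd (Qg (fst H, {}))"
    if "u \<in> fst H" "v \<in> fst H" for u v
  proof -
    have "{u, v} \<in> snd H \<longleftrightarrow> u \<noteq> v"
      using that assms(2) wf_graph_edge_neq[OF assms(1)] unfolding complete_graph_def by blast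
    then show ?thesis
      using that by (simp add: Qg_edge_iff)
  qed
  ultimately show ?thesis
    using assms(1) unfolding is_Qgraph_def graph_iso_def by blast
qed

section \<open>Q-graphs with dangling edges\<close>

text \<open>An edge-vertex e is anchored at its endpoint in V when it has one (unique if e is not inside
  V); otherwise at an arbitrary vertex of V, but then e is not in Q_touching and gets no anchor
  edge.\<close>

definition Q_anchor :: "'a set \<Rightarrow> 'a + 'a set \<Rightarrow> 'a + 'a set" where
  "Q_anchor V = case_sum Inl (\<lambda>e. Inl (SOME u. u \<in> V \<and> (e \<inter> V \<noteq> {} \<longrightarrow> u \<in> e)))"

lemma Q_anchor_in:
  assumes "V \<noteq> {}"
  shows "Q_anchor V (Inr e) \<in> Inl ` V"
proof -
  have "\<exists>u. u \<in> V \<and> (e \<inter> V \<noteq> {} \<longrightarrow> u \<in> e)"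
    using assms by blast
  from someI_ex[OF this] show ?thesis
    unfolding Q_anchor_def by simp
qed

lemma Q_anchor_eq:
  assumes "e = {x, y}" "\<not> e \<subseteq> V" "u \<in> e" "u \<in> V"
  shows "Q_anchor V (Inr e) = Inl u"
proof -
  have "e \<inter> V = {u}"
    using assms by auto
  then show ?thesis
    unfolding Q_anchor_def by auto
qed

context
  fixes V :: "'a set" and E :: "'a set set"
  assumes pairs: "\<forall>e\<in>E. \<exists>x y. e = {x, y}"
begin

abbreviation Q_dangling :: "('a + 'a set) set" where
  "Q_dangling \<equiv> Inr ` {e \<in> E. \<not> e \<subseteq> V}"

abbreviation Q_inner :: "('a + 'a set) set" where
  "Q_inner \<equiv> Inr ` {e \<in> E. e \<subseteq> V}"

abbreviation Q_touching :: "('a + 'a set) set" where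
  "Q_touching \<equiv> Inr ` {e. e \<inter> V \<noteq> {}}"

abbreviation Q_split :: "('a + 'a set) set set" where
  "Q_split \<equiv> snd (Qg (V, {e \<in> E. e \<subseteq> V})) \<union> clique_edges Q_dangling
    \<union> anchor_edges Q_touching (Q_anchor V) Q_dangling \<union> cross Q_dangling Q_inner"

lemma Q_anchor_dangling: "a \<in> E \<Longrightarrow> \<not> a \<subseteq> V \<Longrightarrow> u \<in> a \<Longrightarrow> u \<in> V \<Longrightarrow> Q_anchor V (Inr a) = Inl u"
  using pairs Q_anchor_eq by metis

lemma vertex_edge_in_dangling_split:
  assumes "Q_adj (V, E) (Inl u) (Inr a)"
  shows "{Inl u, Inr a} \<in> Q_split"
proof (cases "a \<subseteq> V")
  case True
  with assms show ?thesis
    by (simp add: Qg_edge_iff)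
next
  case False
  with assms have "{Inr a, Q_anchor V (Inr a)} \<in> anchor_edges Q_touching (Q_anchor V) Q_dangling"
    unfolding anchor_edges_def by auto
  moreover have "Q_anchor V (Inr a) = Inl u"
    using assms False by (simp add: Q_anchor_dangling)
  ultimately show ?thesis
    by (simp add: insert_commute)
qed

lemma edge_edge_in_dangling_split:
  assumes "Q_adj (V, E) (Inr a) (Inr b)"
  shows "{Inr a, Inr b} \<in> Q_split"
proof (cases "a \<subseteq> V"; cases "b \<subseteq> V")
  assume "a \<subseteq> V" "b \<subseteq> V"
  with assms show ?thesis
    by (simp add: Qg_edge_iff)
next
  assume "\<not> a \<subseteq> V" "\<not> b \<subseteq> V"
  with assms have "{Inr a, Inr b} \<in> clique_edges Q_dangling"
    unfolding clique_edges_def by auto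
  then show ?thesis
    by simp
next
  assume "\<not> a \<subseteq> V" "b \<subseteq> V"
  with assms have "Inr a \<in> Q_dangling" "Inr b \<in> Q_inner"
    by auto
  then have "{Inr a, Inr b} \<in> cross Q_dangling Q_inner"
    unfolding cross_def by blast
  then show ?thesis
    by simp
next
  assume "a \<subseteq> V" "\<not> b \<subseteq> V"
  with assms have "Inr b \<in> Q_dangling" "Inr a \<in> Q_inner"
    by auto
  then have "{Inr b, Inr a} \<in> cross Q_dangling Q_inner"
    unfolding cross_def by blast
  then show ?thesis
    by (simp add: insert_commute)
qed

lemma snd_Qg_dangling: "snd (Qg (V, E)) = Q_split"
proof -
  have "{x, y} \<in> Q_split" if "Q_adj (V, E) x y" for x y
  proof (cases x; cases y)
    fix u v assume "x = Inl u" "y = Inl v"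
    with that show ?thesis by (simp add: Qg_edge_iff)
  next
    fix u a assume "x = Inl u" "y = Inr a"
    with that show ?thesis by (simp only: vertex_edge_in_dangling_split)
  next
    fix a u assume "x = Inr a" "y = Inl u"
    with that vertex_edge_in_dangling_split[of u a] show ?thesis by (simp add: insert_commute)
  next
    fix a b assume "x = Inr a" "y = Inr b"
    with that show ?thesis by (simp only: edge_edge_in_dangling_split)
  qed
  then have "snd (Qg (V, E)) \<subseteq> Q_split"
    unfolding snd_Qg[of "(V, E)"] by blast
  moreover have "snd (Qg (V, {e \<in> E. e \<subseteq> V})) \<subseteq> snd (Qg (V, E))"
  proof
    fix e assume "e \<in> snd (Qg (V, {e \<in> E. e \<subseteq> V}))"
    then obtain x y where "e = {x, y}" "Q_adj (V, {e \<in> E. e \<subseteq> V}) x y"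
      unfolding snd_Qg[of "(V, {e \<in> E. e \<subseteq> V})"] by blast
    moreover have "Q_adj (V, E) x y"
      using calculation(2) by (cases x; cases y) auto
    ultimately show "e \<in> snd (Qg (V, E))"
      by (simp add: Qg_edge_iff)
  qed
  moreover have "clique_edges Q_dangling \<subseteq> snd (Qg (V, E))"
    "cross Q_dangling Q_inner \<subseteq> snd (Qg (V, E))"
    unfolding clique_edges_def cross_def by (auto simp: Qg_edge_iff)
  moreover have "anchor_edges Q_touching (Q_anchor V) Q_dangling \<subseteq> snd (Qg (V, E))"
  proof
    fix e assume "e \<in> anchor_edges Q_touching (Q_anchor V) Q_dangling"
    then obtain a u where "e = {Inr a, Q_anchor V (Inr a)}" "a \<in> E" "\<not> a \<subseteq> V" "u \<in> a" "u \<in> V"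
      unfolding anchor_edges_def by blast
    then show "e \<in> snd (Qg (V, E))"
      by (simp add: Q_anchor_dangling Qg_edge_iff)
  qed
  ultimately show ?thesis
    by (simp only: Un_assoc subset_antisym le_sup_iff)
qed

end

lemma cw_le_Qg_dangling:
  assumes "wf_graph G" "V \<subseteq> fst G" "E \<subseteq> snd G" "V \<noteq> {}"
    and "cw_le k (Qg (V, {e \<in> E. e \<subseteq> V}))"
  shows "cw_le (2 * k + 2) (Qg (V, E))"
proof -
  let ?W = "fst (Qg (V, {e \<in> E. e \<subseteq> V}))"
  obtain l where l: "has_kexp k ?W (snd (Qg (V, {e \<in> E. e \<subseteq> V}))) l"
    using assms(5) unfolding cw_le_iff_has_kexp by blast
  have inner: "Q_inner V E \<subseteq> ?W" and disj: "Q_dangling V E \<inter> ?W = {}"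
    by (auto simp: Qg_def)
  have fin: "finite (Q_dangling V E)"
    using finite_subset[OF assms(3) wf_graph_finite_edges[OF assms(1)]] by simp
  have anchors: "Q_anchor V ` Q_dangling V E \<subseteq> ?W"
    using Q_anchor_in[OF assms(4)] by (auto simp: Qg_def)
  obtain m where "has_kexp (2 * k + 2) (?W \<union> Q_dangling V E) (Q_split V E) m"
    using has_kexp_add_anchored_clique[OF l inner fin disj anchors] by blast
  moreover have "\<forall>e\<in>E. \<exists>x y. e = {x, y}"
    using assms(1,3) unfolding wf_graph_def by blast
  then have "Q_split V E = snd (Qg (V, E))"
    by (rule snd_Qg_dangling[symmetric])
  moreover have "?W \<union> Q_dangling V E = fst (Qg (V, E))"
    by (auto simp: Qg_def)
  ultimately show ?thesis
    unfolding cw_le_iff_has_kexp by auto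
qed

section \<open>Hereditary subclasses of Q*\<close>

lemma wf_graph_Qg_subgraph:
  assumes "wf_graph G" "V \<subseteq> fst G" "E \<subseteq> snd G"
  shows "wf_graph (Qg (V, E))"
proof -
  have "Inl ` V \<union> Inr ` E \<subseteq> fst (Qg G)"
    using assms(2,3) by (auto simp: Qg_def)
  from wf_graph_induce[OF wf_graph_Qg[OF assms(1)] this] show ?thesis
    unfolding induce_Qg[OF assms(2,3)] .
qed

lemma wf_graph_inner_edges:
  assumes "wf_graph G" "V \<subseteq> fst G" "E \<subseteq> snd G"
  shows "wf_graph (V, {e \<in> E. e \<subseteq> V})"
proof -
  have "finite V"
    using finite_subset[OF assms(2)] assms(1) unfolding wf_graph_def by blast
  moreover have "\<exists>u v. e = {u, v} \<and> u \<noteq> v \<and> u \<in> V \<and> v \<in> V" if e: "e \<in> E" "e \<subseteq> V" for e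
  proof -
    obtain u v where "e = {u, v}" "u \<noteq> v"
      using e(1) assms(1,3) unfolding wf_graph_def by blast
    with e(2) show ?thesis by blast
  qed
  ultimately show ?thesis
    unfolding wf_graph_def by simp
qed

lemma Qstar_all_iso_Qg:
  assumes "H \<in> Qstar_all"
  obtains G :: "nat graph" and V E
  where "wf_graph G" "V \<subseteq> fst G" "E \<subseteq> snd G" "graph_iso H (Qg (V, E))"
proof -
  obtain G :: "nat graph" and H'
    where G: "wf_graph G" and "induced_subgraph H' (Qg G)" and iso: "graph_iso H H'"
    using assms unfolding Qstar_all_def all_graphs_def by blast
  then obtain S where S: "S \<subseteq> fst (Qg G)" "H' = induce (Qg G) S"
    unfolding induced_subgraph_iff by blast
  define V where "V = {v. Inl v \<in> S}"
  define E where "E = {e. Inr e \<in> S}"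
  have "S = Inl ` V \<union> Inr ` E"
  proof (intro equalityI subsetI)
    fix x assume "x \<in> S"
    then show "x \<in> Inl ` V \<union> Inr ` E"
      unfolding V_def E_def by (cases x) auto
  qed (auto simp: V_def E_def)
  moreover have VE: "V \<subseteq> fst G" "E \<subseteq> snd G"
    using S(1) unfolding V_def E_def by (auto simp: Qg_def)
  ultimately have "H' = Qg (V, E)"
    using S(2) induce_Qg by metis
  with G VE iso show ?thesis
    using that by blast
qed

lemma cw_le_Qg_inner_edges:
  fixes G :: "nat graph"
  assumes "hereditary X" and bound: "\<forall>G\<in>X. is_Qgraph G \<longrightarrow> clique_width G \<le> c"
    and "H \<in> X" "wf_graph H" "wf_graph G" "V \<subseteq> fst G" "E \<subseteq> snd G" "V \<noteq> {}"
    and iso: "graph_iso H (Qg (V, E))"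
  shows "cw_le c (Qg (V, {e \<in> E. e \<subseteq> V}))"
proof -
  let ?E = "{e \<in> E. e \<subseteq> V}"
  have "Inl ` V \<union> Inr ` ?E \<subseteq> fst (Qg (V, E))"
    by (auto simp: Qg_def)
  from graph_iso_induce[OF iso this]
  obtain R where R: "R \<subseteq> fst H" and iso_core: "graph_iso (induce H R) (Qg (V, ?E))"
    unfolding induce_Qg[of V "(V, E)" ?E, simplified] by blast
  have wf_core: "wf_graph (V, ?E)"
    using assms(5-7) by (rule wf_graph_inner_edges)
  have wf_R: "wf_graph (induce H R)"
    using wf_graph_induce[OF assms(4) R] .
  have "induce H R \<in> X"
    using assms(1,3) induced_subgraph_induce[OF R] unfolding hereditary_def by blast
  moreover have "is_Qgraph (induce H R)"
    using wf_R wf_core iso_core unfolding is_Qgraph_def all_graphs_def by blast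
  ultimately have "clique_width (induce H R) \<le> c"
    using bound by blast
  moreover have "fst (Qg (V, ?E)) \<noteq> {}"
    using assms(8) by (simp add: Qg_def)
  then have "fst (induce H R) \<noteq> {}"
    using iso_core unfolding graph_iso_def bij_betw_def by auto
  ultimately have "cw_le c (induce H R)"
    using cw_le_clique_width[OF wf_R] cw_le_mono by blast
  then show ?thesis
    by (rule cw_le_graph_iso[OF wf_R wf_graph_Qg[OF wf_core] iso_core])
qed

lemma clique_width_Qstar_le:
  assumes "hereditary X" "X \<subseteq> Qstar_all" "\<forall>G\<in>X. is_Qgraph G \<longrightarrow> clique_width G \<le> c"
    and "H \<in> X" "fst H \<noteq> {}"
  shows "clique_width H \<le> 2 * c + 2"
proof -
  have Q: "H \<in> Qstar_all"
    using assms(2,4) by blast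
  then have wf_H: "wf_graph H"
    unfolding Qstar_all_def by blast
  from Q obtain G :: "nat graph" and V E where G: "wf_graph G" "V \<subseteq> fst G" "E \<subseteq> snd G"
    and iso: "graph_iso H (Qg (V, E))"
    by (rule Qstar_all_iso_Qg)
  show ?thesis
  proof (cases "V = {}")
    case True
    then have "complete_graph H"
      using complete_graph_iso[OF iso] complete_graph_Qg_no_vertices[of E] by simp
    then have "is_Qgraph H"
      by (rule is_Qgraph_complete_graph[OF wf_H])
    with assms(3,4) have "clique_width H \<le> c"
      by blast
    then show ?thesis
      by simp
  next
    case False
    from cw_le_Qg_inner_edges[OF assms(1,3,4) wf_H G False iso]
    have "cw_le (2 * c + 2) (Qg (V, E))"
      by (rule cw_le_Qg_dangling[OF G False])
    then have "cw_le (2 * c + 2) H"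
      using cw_le_graph_iso[OF wf_graph_Qg_subgraph[OF G] wf_H graph_iso_sym[OF iso]] by blast
    then show ?thesis
      by (rule clique_width_le)
  qed
qed

theorem lemma4p2:
  fixes X :: "nat graph set"
  assumes "hereditary X" and "X \<subseteq> Qstar_all"
  shows "(\<exists>c. \<forall>G\<in>X. clique_width G \<le> c) \<longleftrightarrow>
         (\<exists>c. \<forall>G\<in>X. is_Qgraph G \<longrightarrow> clique_width G \<le> c)"
proof
  assume "\<exists>c. \<forall>G\<in>X. clique_width G \<le> c"
  then show "\<exists>c. \<forall>G\<in>X. is_Qgraph G \<longrightarrow> clique_width G \<le> c"
    by blast
next
  assume "\<exists>c. \<forall>G\<in>X. is_Qgraph G \<longrightarrow> clique_width G \<le> c"
  then obtain c where c: "\<forall>G\<in>X. is_Qgraph G \<longrightarrow> clique_width G \<le> c"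
    by blast
  \<comment> \<open>The empty graph has no k-expression: its clique width is the junk value LEAST k. False.\<close>
  have "clique_width H \<le> max (2 * c + 2) (clique_width ({} :: nat set, {}))"
    if "H \<in> X" for H :: "nat graph"
  proof (cases "fst H = {}")
    case True
    moreover have "wf_graph H"
      using that assms(2) unfolding Qstar_all_def by auto
    ultimately have "H = ({}, {})"
      unfolding wf_graph_def by (cases H) auto
    then show ?thesis
      by simp
  next
    case False
    then show ?thesis
      using clique_width_Qstar_le[OF assms c that] by simp
  qed
  then show "\<exists>c. \<forall>G\<in>X. clique_width G \<le> c"
    by blast
qed

end
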